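(* Let $\phi:\langle S\mid R\rangle\to\mathbb{Z}^n$ be an isomorphism where $\langle S\mid R\rangle$ is a 3-presentation, let $S'\subseteq S$, and let $d=\dim S'$. Then there exist words $w_1,\dots,w_d$ in the free group on $S$ such that, letting $R''$ consist of the words obtained from each element of $R\cup\{w_1,\dots,w_d\}$ by deleting every occurrence of every generator in $S'$, we have $\langle S\setminus S'\mid R''\rangle\cong\mathbb{Z}^{n-d}$ (and $|R''|=|R|+d$).
   Context: A 3-presentation of a group $G$ is a group presentation $\langle S\mid R\rangle\cong G$ (with $S,R$ finite) in which each relation is the empty word, $g^a$, $g^ah^b$, or $g^ah^bi^c$ with $g,h,i\in S$ and $a,b,c\in\mathbb{Z}$. For $S'\subseteq S$, $\dim S'=\dim\operatorname{span}_{\mathbb{R}}\{\phi(g):g\in S'\}$, viewing $\phi(g)\in\mathbb{Z}^n\subseteq\mathbb{R}^n$. *)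

theory Defs
  imports "HOL-Algebra.Algebra" "HOL-Library.Function_Algebras"
begin

text \<open>Words in the free group on generators of type 'a are lists of syllables
  (g, a), standing for g to the power a (a an integer).\<close>

type_synonym 'a word = "('a \<times> int) list"

definition word_on :: "'a set \<Rightarrow> 'a word \<Rightarrow> bool" where
  "word_on S w \<longleftrightarrow> fst ` set w \<subseteq> S"

inductive pres_eq :: "'a set \<Rightarrow> 'a word set \<Rightarrow> 'a word \<Rightarrow> 'a word \<Rightarrow> bool"
  for S :: "'a set" and R :: "'a word set" where
  zero: "\<lbrakk>word_on S u; word_on S v; g \<in> S\<rbrakk> \<Longrightarrow> pres_eq S R (u @ [(g, 0)] @ v) (u @ v)"
| merge: "\<lbrakk>word_on S u; word_on S v; g \<in> S\<rbrakk> \<Longrightarrow>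
           pres_eq S R (u @ [(g, a), (g, b)] @ v) (u @ [(g, a + b)] @ v)"
| rel: "\<lbrakk>word_on S u; word_on S v; r \<in> R; word_on S r\<rbrakk> \<Longrightarrow> pres_eq S R (u @ r @ v) (u @ v)"
| refl: "word_on S u \<Longrightarrow> pres_eq S R u u"
| sym: "pres_eq S R u v \<Longrightarrow> pres_eq S R v u"
| trans: "pres_eq S R u v \<Longrightarrow> pres_eq S R v w \<Longrightarrow> pres_eq S R u w"

definition pclass :: "'a set \<Rightarrow> 'a word set \<Rightarrow> 'a word \<Rightarrow> 'a word set" where
  "pclass S R w = {v. pres_eq S R w v}"

definition presented_group :: "'a set \<Rightarrow> 'a word set \<Rightarrow> 'a word set monoid" where
  "presented_group S R =
     \<lparr>carrier = pclass S R ` {w. word_on S w},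
      monoid.mult = (\<lambda>A B. \<Union>w\<in>A. \<Union>v\<in>B. pclass S R (w @ v)),
      one = pclass S R []\<rparr>"

definition gen :: "'a set \<Rightarrow> 'a word set \<Rightarrow> 'a \<Rightarrow> 'a word set" where
  "gen S R g = pclass S R [(g, 1)]"

text \<open>3-presentation: S, R finite, every relator is a word over S of the form
  empty, g^a, g^a h^b or g^a h^b i^c, i.e. has at most 3 syllables.
  Relators are given as a list (so |R| counts them with multiplicity).\<close>

definition three_presentation :: "'a set \<Rightarrow> 'a word list \<Rightarrow> bool" where
  "three_presentation S R \<longleftrightarrow> finite S \<and> (\<forall>r\<in>set R. word_on S r \<and> length r \<le> 3)"

definition Zn :: "nat \<Rightarrow> (nat \<Rightarrow> int) monoid" where
  "Zn n = \<lparr>carrier = {v. \<forall>i\<ge>n. v i = 0}, monoid.mult = (\<lambda>u v i. u i + v i), one = (\<lambda>i. 0)\<rparr>"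

definition gen_dim :: "'a set \<Rightarrow> 'a word set \<Rightarrow> ('a word set \<Rightarrow> (nat \<Rightarrow> int)) \<Rightarrow> 'a set \<Rightarrow> nat" where
  "gen_dim S R \<phi> S' =
     vector_space.dim (\<lambda>(c::real) (v::nat \<Rightarrow> real) i. c * v i)
       ((\<lambda>g i. real_of_int (\<phi> (gen S R g) i)) ` S')"

definition delete_gens :: "'a set \<Rightarrow> 'a word \<Rightarrow> 'a word" where
  "delete_gens S' w = filter (\<lambda>x. fst x \<notin> S') w"

end

theory Submission
  imports Defs
begin

text \<open>Through \<open>\<phi>\<close> every word becomes a vector of \<open>\<int>\<^sup>n\<close>, its exponent sum weighted by the images
  of the generators. Let \<open>L\<close> be the saturation of the lattice spanned by the images of the
  generators in \<open>S'\<close>, i.e. the integer points of their real span; it has rank \<open>d\<close> and is a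
  direct summand, so there is a surjection \<open>\<pi> : \<int>\<^sup>n \<rightarrow> \<int>\<^sup>m\<close>, \<open>m = n - d\<close>, with kernel \<open>L\<close>. It is built one
  vector at a time: the image of the next vector under the current projection is a multiple of
  a primitive vector, which a product of elementary unimodular maps moves to the first
  coordinate vector, and that coordinate is then dropped.

  Take words \<open>w\<^sub>1, \<dots>, w\<^sub>d\<close> whose images form a basis of \<open>L\<close>. Sending a word over \<open>S - S'\<close> to
  \<open>\<pi>\<close> of its image kills every deleted relator (the generators of \<open>S'\<close> go to \<open>L\<close>, the relators
  of \<open>R\<close> to \<open>0\<close>, the \<open>w\<^sub>i\<close> into \<open>L\<close>), so it induces a homomorphism onto \<open>\<int>\<^sup>m\<close>. It is
  injective: if two words have the same image, their images under \<open>\<phi>\<close> differ by an element of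
  \<open>L\<close>, i.e. in \<open>\<langle>S | R\<rangle>\<close> the words differ by a product of the \<open>w\<^sub>i\<close>, and deleting \<open>S'\<close> turns this
  into an equality modulo the new relators.\<close>

section \<open>Words and presented groups\<close>

lemma word_on_Nil [simp]: "word_on S []"
  by (simp add: word_on_def)

lemma word_on_Cons [simp]: "word_on S (x # w) \<longleftrightarrow> fst x \<in> S \<and> word_on S w"
  by (auto simp: word_on_def)

lemma word_on_append [simp]: "word_on S (u @ v) \<longleftrightarrow> word_on S u \<and> word_on S v"
  by (auto simp: word_on_def)

lemma word_on_mono: "word_on T w \<Longrightarrow> T \<subseteq> S \<Longrightarrow> word_on S w"
  by (auto simp: word_on_def)

lemma pres_eq_word_on: "pres_eq S R u v \<Longrightarrow> word_on S u \<and> word_on S v"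
  by (induction rule: pres_eq.induct) auto

lemma pres_eq_in_context:
  assumes "pres_eq S R u v" "word_on S x" "word_on S y"
  shows "pres_eq S R (x @ u @ y) (x @ v @ y)"
  using assms(1)
proof (induction rule: pres_eq.induct)
  case (zero u v g)
  then show ?case using pres_eq.zero[of S "x @ u" "v @ y" g R] assms by simp
next
  case (merge u v g a b)
  then show ?case using pres_eq.merge[of S "x @ u" "v @ y" g R a b] assms by simp
next
  case (rel u v r)
  then show ?case using pres_eq.rel[of S "x @ u" "v @ y" r R] assms by simp
next
  case (refl u)
  then show ?case using assms by (simp add: pres_eq.refl)
qed (blast intro: pres_eq.sym pres_eq.trans)+

lemma pres_eq_append:
  assumes "pres_eq S R u v" "pres_eq S R u' v'"
  shows "pres_eq S R (u @ u') (v @ v')"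
proof (rule pres_eq.trans)
  show "pres_eq S R (u @ u') (v @ u')"
    using pres_eq_in_context[OF assms(1), of "[]" u'] pres_eq_word_on[OF assms(2)] by simp
  show "pres_eq S R (v @ u') (v @ v')"
    using pres_eq_in_context[OF assms(2), of v "[]"] pres_eq_word_on[OF assms(1)] by simp
qed

lemma pres_eq_mono: "pres_eq S R u v \<Longrightarrow> R \<subseteq> R' \<Longrightarrow> pres_eq S R' u v"
  by (induction rule: pres_eq.induct) (auto intro: pres_eq.intros[simplified])

lemma pres_eq_relator: "r \<in> R \<Longrightarrow> word_on S r \<Longrightarrow> pres_eq S R r []"
  using pres_eq.rel[of S "[]" "[]" r R] by simp

lemma pclass_eq_iff: "word_on S u \<Longrightarrow> pclass S R u = pclass S R v \<longleftrightarrow> pres_eq S R u v"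
proof
  assume "word_on S u" "pclass S R u = pclass S R v"
  then have "u \<in> pclass S R v" by (metis mem_Collect_eq pclass_def pres_eq.refl)
  then have "pres_eq S R v u" by (simp add: pclass_def)
  then show "pres_eq S R u v" by (rule pres_eq.sym)
next
  assume "pres_eq S R u v"
  then show "pclass S R u = pclass S R v"
    unfolding pclass_def by (blast intro: pres_eq.sym pres_eq.trans)
qed

lemma carrier_presented_group: "carrier (presented_group S R) = pclass S R ` {w. word_on S w}"
  by (simp add: presented_group_def)

lemma pclass_in_carrier: "word_on S u \<Longrightarrow> pclass S R u \<in> carrier (presented_group S R)"
  by (simp add: carrier_presented_group)

lemma pclass_mult:
  assumes "word_on S u" "word_on S v"
  shows "pclass S R u \<otimes>\<^bsub>presented_group S R\<^esub> pclass S R v = pclass S R (u @ v)"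
proof -
  have "pclass S R (u' @ v') = pclass S R (u @ v)" if "u' \<in> pclass S R u" "v' \<in> pclass S R v" for u' v'
  proof -
    have "pres_eq S R (u @ v) (u' @ v')"
      using that by (auto simp: pclass_def intro: pres_eq_append)
    then have "pclass S R (u @ v) = pclass S R (u' @ v')"
      using assms by (simp add: pclass_eq_iff)
    then show ?thesis by simp
  qed
  moreover have "u \<in> pclass S R u" "v \<in> pclass S R v"
    using assms by (auto simp: pclass_def intro: pres_eq.refl)
  ultimately show ?thesis
    unfolding presented_group_def monoid.select_convs by blast
qed

lemma delete_gens_Nil [simp]: "delete_gens S' [] = []"
  by (simp add: delete_gens_def)

lemma delete_gens_Cons:
  "delete_gens S' (x # w) = (if fst x \<in> S' then delete_gens S' w else x # delete_gens S' w)"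
  by (simp add: delete_gens_def)

lemma delete_gens_append [simp]: "delete_gens S' (u @ v) = delete_gens S' u @ delete_gens S' v"
  by (simp add: delete_gens_def)

lemma word_on_delete_gens: "word_on S w \<Longrightarrow> word_on (S - S') (delete_gens S' w)"
  by (auto simp: word_on_def delete_gens_def)

lemma delete_gens_id: "word_on (S - S') w \<Longrightarrow> delete_gens S' w = w"
  by (auto simp: word_on_def delete_gens_def intro!: filter_True)

lemma pres_eq_delete_gens:
  "pres_eq S R u v \<Longrightarrow> pres_eq (S - S') (delete_gens S' ` R) (delete_gens S' u) (delete_gens S' v)"
proof (induction rule: pres_eq.induct)
  case (zero u v g)
  then show ?case
    using pres_eq.zero[of "S - S'" "delete_gens S' u" "delete_gens S' v" g]
    by (auto simp: delete_gens_Cons word_on_delete_gens intro: pres_eq.refl)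
next
  case (merge u v g a b)
  then show ?case
    using pres_eq.merge[of "S - S'" "delete_gens S' u" "delete_gens S' v" g]
    by (auto simp: delete_gens_Cons word_on_delete_gens intro: pres_eq.refl)
next
  case (rel u v r)
  then show ?case
    using pres_eq.rel[of "S - S'" "delete_gens S' u" "delete_gens S' v" "delete_gens S' r"]
    by (auto intro: word_on_delete_gens)
next
  case (refl u)
  then show ?case by (simp add: pres_eq.refl word_on_delete_gens)
qed (blast intro: pres_eq.sym pres_eq.trans)+

section \<open>Integer vectors and the exponent-sum map\<close>

definition zvecs :: "nat \<Rightarrow> (nat \<Rightarrow> int) set" where
  "zvecs n = {x. \<forall>i\<ge>n. x i = 0}"

lemma mem_zvecs: "x \<in> zvecs n \<longleftrightarrow> (\<forall>i\<ge>n. x i = 0)"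
  by (simp add: zvecs_def)

lemma carrier_Zn: "carrier (Zn n) = zvecs n"
  by (simp add: Zn_def zvecs_def)

lemma mult_Zn: "x \<otimes>\<^bsub>Zn n\<^esub> y = x + y"
  by (simp add: Zn_def fun_eq_iff)

definition zscale :: "int \<Rightarrow> (nat \<Rightarrow> int) \<Rightarrow> (nat \<Rightarrow> int)" where
  "zscale c x = (\<lambda>i. c * x i)"

lemma zscale_apply: "zscale c x i = c * x i"
  by (simp add: zscale_def)

interpretation ZM: Modules.module zscale
  by unfold_locales (auto simp: zscale_def fun_eq_iff algebra_simps)

lemma ZM_subspaceI:
  assumes "0 \<in> A" and "\<And>x y. x \<in> A \<Longrightarrow> y \<in> A \<Longrightarrow> x + y \<in> A" and "\<And>x. x \<in> A \<Longrightarrow> - x \<in> A"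
  shows "ZM.subspace A"
proof (rule ZM.subspaceI)
  fix c x
  assume x: "x \<in> A"
  show "zscale c x \<in> A"
  proof (induction c rule: int_induct[where k = 0])
    case base
    then show ?case using assms(1) by (simp only: ZM.scale_zero_left)
  next
    case (step1 i)
    then show ?case using assms(2)[OF step1(2) x]
      by (simp only: ZM.scale_left_distrib ZM.scale_one)
  next
    case (step2 i)
    have "zscale (i - 1) x = zscale i x + - x"
      using ZM.scale_left_diff_distrib[of i 1 x] by simp
    then show ?case using assms(2)[OF step2(2) assms(3)[OF x]] by (simp only:)
  qed
qed (use assms in auto)

lemma subspace_zvecs: "ZM.subspace (zvecs n)"
  by (rule ZM_subspaceI) (auto simp: zvecs_def)

lemma additive_zscale:
  assumes "additive f"
  shows "f (zscale c x) = zscale c (f x)"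
proof (induction c rule: int_induct[where k = 0])
  case base
  then show ?case using additive.zero[OF assms] by (simp only: ZM.scale_zero_left)
next
  case (step1 i)
  then show ?case
    by (simp only: ZM.scale_left_distrib ZM.scale_one additive.add[OF assms])
next
  case (step2 i)
  then show ?case
    by (simp only: ZM.scale_left_diff_distrib ZM.scale_one additive.diff[OF assms])
qed

lemma subspace_kernel:
  assumes "additive f"
  shows "ZM.subspace {x \<in> zvecs n. f x = 0}"
  using additive.zero[OF assms] additive.add[OF assms] additive.minus[OF assms]
  by (intro ZM_subspaceI) (auto simp: mem_zvecs)

lemma sum_fun_apply: "(\<Sum>i\<in>A. g i) x = (\<Sum>i\<in>A. g i x)"
  by (induction A rule: infinite_finite_induct) auto

definition unit_vec :: "nat \<Rightarrow> nat \<Rightarrow> int" where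
  "unit_vec j = (\<lambda>i. if i = j then 1 else 0)"

lemma zvecs_expansion:
  assumes "x \<in> zvecs n"
  shows "x = (\<Sum>i<n. zscale (x i) (unit_vec i))"
proof
  fix k
  have "(\<Sum>i<n. zscale (x i) (unit_vec i)) k = (\<Sum>i<n. if k = i then x i else 0)"
    unfolding sum_fun_apply by (rule sum.cong) (auto simp: zscale_apply unit_vec_def)
  then show "x k = (\<Sum>i<n. zscale (x i) (unit_vec i)) k"
    using assms by (simp add: mem_zvecs)
qed

definition ab_eval :: "('a \<Rightarrow> nat \<Rightarrow> int) \<Rightarrow> 'a word \<Rightarrow> nat \<Rightarrow> int" where
  "ab_eval h w = (\<Sum>(g, a)\<leftarrow>w. zscale a (h g))"

lemma ab_eval_Nil [simp]: "ab_eval h [] = 0"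
  by (simp add: ab_eval_def)

lemma ab_eval_Cons [simp]: "ab_eval h ((g, a) # w) = zscale a (h g) + ab_eval h w"
  by (simp add: ab_eval_def)

lemma ab_eval_append [simp]: "ab_eval h (u @ v) = ab_eval h u + ab_eval h v"
  by (simp add: ab_eval_def)

lemma ab_eval_in_zvecs: "word_on S w \<Longrightarrow> (\<And>g. g \<in> S \<Longrightarrow> h g \<in> zvecs n) \<Longrightarrow> ab_eval h w \<in> zvecs n"
  by (induction w) (auto simp: mem_zvecs zscale_apply)

lemma additive_ab_eval: "additive f \<Longrightarrow> f (ab_eval h w) = ab_eval (f \<circ> h) w"
  by (induction w) (auto simp: additive.zero additive.add additive_zscale)

lemma ab_eval_delete_gens: "(\<And>g. g \<in> S' \<Longrightarrow> h g = 0) \<Longrightarrow> ab_eval h (delete_gens S' w) = ab_eval h w"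
  by (induction w) (auto simp: delete_gens_Cons)

section \<open>Unimodular reduction of primitive vectors\<close>

definition zlinear :: "nat \<Rightarrow> nat \<Rightarrow> ((nat \<Rightarrow> int) \<Rightarrow> (nat \<Rightarrow> int)) \<Rightarrow> bool" where
  "zlinear n m f \<longleftrightarrow> additive f \<and> f ` zvecs n \<subseteq> zvecs m"

lemma zlinear_comp: "zlinear n m f \<Longrightarrow> zlinear m k g \<Longrightarrow> zlinear n k (g \<circ> f)"
  by (auto simp: zlinear_def additive_def image_subset_iff)

definition unimodular :: "nat \<Rightarrow> ((nat \<Rightarrow> int) \<Rightarrow> (nat \<Rightarrow> int)) \<Rightarrow> bool" where
  "unimodular m U \<longleftrightarrow> zlinear m m U \<and> bij_betw U (zvecs m) (zvecs m)"

lemma unimodular_comp: "unimodular m f \<Longrightarrow> unimodular m g \<Longrightarrow> unimodular m (g \<circ> f)"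
  unfolding unimodular_def using zlinear_comp bij_betw_trans by blast

lemma unimodular_involution:
  assumes "zlinear m m f" and "\<And>x. x \<in> zvecs m \<Longrightarrow> f (f x) = x"
  shows "unimodular m f"
  using assms unfolding unimodular_def zlinear_def
  by (intro conjI bij_betwI[where g = f]) auto

lemma unimodular_id: "unimodular m id"
  by (rule unimodular_involution) (auto simp: zlinear_def additive_def)

definition transvection :: "nat \<Rightarrow> nat \<Rightarrow> int \<Rightarrow> (nat \<Rightarrow> int) \<Rightarrow> nat \<Rightarrow> int" where
  "transvection i j c x = x(i := x i + c * x j)"

definition swap_coords :: "nat \<Rightarrow> nat \<Rightarrow> (nat \<Rightarrow> int) \<Rightarrow> nat \<Rightarrow> int" where
  "swap_coords i j x = (\<lambda>k. x (if k = i then j else if k = j then i else k))"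

definition negate_coord :: "nat \<Rightarrow> (nat \<Rightarrow> int) \<Rightarrow> nat \<Rightarrow> int" where
  "negate_coord i x = x(i := - x i)"

lemma unimodular_transvection:
  assumes "i < m" "j < m" "i \<noteq> j"
  shows "unimodular m (transvection i j c)"
proof -
  have lin: "zlinear m m (transvection i j d)" for d
    using assms by (auto simp: zlinear_def additive_def transvection_def mem_zvecs fun_eq_iff algebra_simps)
  have "transvection i j (- c) (transvection i j c x) = x"
    and "transvection i j c (transvection i j (- c) x) = x" for x
    using assms by (auto simp: transvection_def fun_eq_iff)
  then show ?thesis
    using lin unfolding unimodular_def zlinear_def
    by (intro conjI bij_betwI[where g = "transvection i j (- c)"]) (auto simp: image_subset_iff)
qed

lemma unimodular_swap_coords: "i < m \<Longrightarrow> j < m \<Longrightarrow> unimodular m (swap_coords i j)"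
  by (rule unimodular_involution)
    (auto simp: zlinear_def additive_def swap_coords_def mem_zvecs fun_eq_iff)

lemma unimodular_negate_coord: "i < m \<Longrightarrow> unimodular m (negate_coord i)"
  by (rule unimodular_involution)
    (auto simp: zlinear_def additive_def negate_coord_def mem_zvecs fun_eq_iff)

definition primitive :: "nat \<Rightarrow> (nat \<Rightarrow> int) \<Rightarrow> bool" where
  "primitive m u \<longleftrightarrow> u \<in> zvecs m \<and> (\<forall>c. (\<forall>i. c dvd u i) \<longrightarrow> is_unit c)"

lemma primitive_nonzero_coord:
  assumes "primitive m u"
  obtains i where "i < m" "u i \<noteq> 0"
proof -
  have "\<not> is_unit (2::int)" by simp
  then have "\<exists>i. \<not> (2::int) dvd u i" using assms by (auto simp: primitive_def)
  then obtain i where "\<not> (2::int) dvd u i" by blast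
  then have "u i \<noteq> 0" by auto
  moreover from this have "i < m" using assms by (auto simp: primitive_def mem_zvecs not_less)
  ultimately show ?thesis using that by blast
qed

lemma primitive_transvection:
  assumes u: "primitive m u" and ij: "i < m" "j < m" "i \<noteq> j"
  shows "primitive m (transvection i j c u)"
  unfolding primitive_def
proof (intro conjI allI impI)
  show "transvection i j c u \<in> zvecs m"
    using u ij by (auto simp: primitive_def transvection_def mem_zvecs)
next
  fix d
  assume d: "\<forall>k. d dvd transvection i j c u k"
  then have other: "d dvd u k" if "k \<noteq> i" for k
    using that by (metis fun_upd_other transvection_def)
  have "u i = transvection i j c u i - c * u j"
    by (simp add: transvection_def)
  then have "d dvd u i"
    using d other[of j] ij(3) by (metis dvd_diff dvd_mult)
  with other have "\<forall>k. d dvd u k" by metis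
  then show "is_unit d" using u by (simp add: primitive_def)
qed

lemma primitive_single_coord:
  assumes u: "primitive m u" and i: "i < m" and zero: "\<And>k. k \<noteq> i \<Longrightarrow> u k = 0"
  shows "\<exists>U. unimodular m U \<and> U u = unit_vec 0"
proof -
  have "\<forall>k. u i dvd u k" using zero by (metis dvd_0_right dvd_refl)
  then have "is_unit (u i)" using u by (auto simp: primitive_def)
  then have ui: "u i = 1 \<or> u i = -1" using zdvd1_eq by auto
  define N where "N = (if u i = 1 then id else negate_coord i)"
  have "unimodular m N" using unimodular_id unimodular_negate_coord[OF i] by (simp add: N_def)
  moreover have "N u = unit_vec i"
    using ui zero by (auto simp: N_def negate_coord_def unit_vec_def fun_eq_iff)
  moreover have "swap_coords 0 i (unit_vec i) = unit_vec 0"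
    by (auto simp: swap_coords_def unit_vec_def fun_eq_iff)
  ultimately show ?thesis
    using unimodular_comp[OF _ unimodular_swap_coords[of 0 m i]] i by (metis comp_apply gr_zeroI not_less0)
qed

lemma transvection_decreases_norm:
  assumes ij: "i < m" "j < m" "i \<noteq> j" "u j \<noteq> 0" "\<bar>u j\<bar> \<le> \<bar>u i\<bar>"
  defines "u' \<equiv> transvection i j (- (sgn (u i) * sgn (u j))) u"
  shows "(\<Sum>k<m. nat \<bar>u' k\<bar>) < (\<Sum>k<m. nat \<bar>u k\<bar>)"
proof -
  have "u' i = u i - sgn (u i) * \<bar>u j\<bar>"
    by (simp add: u'_def transvection_def abs_sgn algebra_simps)
  then have "nat \<bar>u' i\<bar> < nat \<bar>u i\<bar>"
    using ij by (cases "u i > 0") (auto simp: sgn_if)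
  moreover have "(\<Sum>k\<in>{..<m}-{i}. nat \<bar>u' k\<bar>) = (\<Sum>k\<in>{..<m}-{i}. nat \<bar>u k\<bar>)"
    by (intro sum.cong) (auto simp: u'_def transvection_def)
  ultimately show ?thesis
    using ij by (simp add: sum.remove)
qed

text \<open>A Euclidean algorithm on the coordinates: it ends when a single coordinate is nonzero,
  and primitivity makes that coordinate a unit.\<close>

lemma primitive_to_unit_vec:
  assumes "primitive m u"
  shows "\<exists>U. unimodular m U \<and> U u = unit_vec 0"
  using assms
proof (induction "\<Sum>i<m. nat \<bar>u i\<bar>" arbitrary: u rule: less_induct)
  case less
  show ?case
  proof (cases "\<exists>i j. i < m \<and> j < m \<and> i \<noteq> j \<and> u j \<noteq> 0 \<and> \<bar>u j\<bar> \<le> \<bar>u i\<bar>")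
    case True
    then obtain i j where ij: "i < m" "j < m" "i \<noteq> j" "u j \<noteq> 0" "\<bar>u j\<bar> \<le> \<bar>u i\<bar>" by blast
    define T where "T = transvection i j (- (sgn (u i) * sgn (u j)))"
    obtain U where U: "unimodular m U" "U (T u) = unit_vec 0"
      using less.hyps[OF transvection_decreases_norm[OF ij] primitive_transvection[OF less.prems ij(1-3)]]
      by (auto simp: T_def)
    then show ?thesis
      using unimodular_comp[OF unimodular_transvection[OF ij(1-3)] U(1)] unfolding T_def
      by (metis comp_apply)
  next
    case False
    obtain i where i: "i < m" "u i \<noteq> 0" using primitive_nonzero_coord[OF less.prems] by blast
    have "u k = 0" if "k \<noteq> i" for k
    proof (rule ccontr)
      assume nz: "u k \<noteq> 0"
      then have "k < m" using less.prems by (auto simp: primitive_def mem_zvecs not_less)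
      then show False using False i nz that by (cases "\<bar>u k\<bar> \<le> \<bar>u i\<bar>") force+
    qed
    then show ?thesis using primitive_single_coord[OF less.prems i(1)] by blast
  qed
qed

lemma primitive_factor:
  assumes "v \<in> zvecs m" "v \<noteq> 0"
  obtains c u where "c \<noteq> 0" "primitive m u" "v = zscale c u"
proof
  define c where "c = Gcd (range v)"
  show c0: "c \<noteq> 0" using assms(2) by (auto simp: c_def fun_eq_iff)
  define u where "u = (\<lambda>i. v i div c)"
  show v: "v = zscale c u" by (simp add: u_def zscale_def c_def fun_eq_iff)
  show "primitive m u"
    unfolding primitive_def
  proof (intro conjI allI impI)
    show "u \<in> zvecs m" using assms(1) by (simp add: mem_zvecs u_def)
  next
    fix d
    assume "\<forall>i. d dvd u i"
    then have "d * c dvd v i" for i by (subst v) (simp add: zscale_apply mult_dvd_mono mult.commute)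
    then have "d * c dvd c" unfolding c_def by (intro Gcd_greatest) auto
    then show "is_unit d" using c0 by (metis dvd_mult_cancel_right mult_1 mult.commute)
  qed
qed

section \<open>Saturating the lattice spanned by finitely many vectors\<close>

interpretation RV: vector_space "\<lambda>(c::real) (v::nat \<Rightarrow> real) i. c * v i"
  by unfold_locales (auto simp: fun_eq_iff algebra_simps)

definition of_int_vec :: "(nat \<Rightarrow> int) \<Rightarrow> nat \<Rightarrow> real" where
  "of_int_vec x = (\<lambda>i. real_of_int (x i))"

lemma of_int_vec_add: "of_int_vec (x + y) = of_int_vec x + of_int_vec y"
  by (simp add: of_int_vec_def fun_eq_iff)

lemma of_int_vec_diff: "of_int_vec (x - y) = of_int_vec x - of_int_vec y"
  by (simp add: of_int_vec_def fun_eq_iff)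

lemma of_int_vec_zscale: "of_int_vec (zscale c x) = (\<lambda>i. real_of_int c * of_int_vec x i)"
  by (simp add: of_int_vec_def zscale_def fun_eq_iff)

lemma inj_of_int_vec: "inj of_int_vec"
  by (auto simp: inj_def of_int_vec_def fun_eq_iff)

lemma of_int_vec_span: "x \<in> ZM.span B \<Longrightarrow> of_int_vec x \<in> RV.span (of_int_vec ` B)"
proof (induction rule: ZM.span_induct_alt)
  case base
  then show ?case by (simp add: of_int_vec_def RV.span_zero flip: zero_fun_def)
next
  case (step c b y)
  then show ?case
    unfolding of_int_vec_add of_int_vec_zscale
    by (intro RV.span_add[OF RV.span_scale[OF RV.span_base]]) auto
qed

text \<open>A coordinate of a \<open>\<int>\<close>-linear map extends to a real linear functional, which
  separates \<open>x\<close> from the real span of \<open>B\<close>.\<close>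

lemma coordinate_not_in_span:
  assumes f: "zlinear n m f" and B: "\<forall>b\<in>B. b \<in> zvecs n \<and> f b j = 0"
    and x: "x \<in> zvecs n" "f x j \<noteq> 0"
  shows "of_int_vec x \<notin> RV.span (of_int_vec ` B)"
proof
  define F where "F y = (\<Sum>i<n. y i * real_of_int (f (unit_vec i) j))" for y :: "nat \<Rightarrow> real"
  have F: "F (of_int_vec z) = real_of_int (f z j)" if "z \<in> zvecs n" for z
  proof -
    have add: "additive f" using f by (simp add: zlinear_def)
    have "f z = f (\<Sum>i<n. zscale (z i) (unit_vec i))"
      using arg_cong[OF zvecs_expansion[OF that], of f] .
    also have "\<dots> = (\<Sum>i<n. zscale (z i) (f (unit_vec i)))"
      by (simp add: additive.sum[OF add] additive_zscale[OF add])
    finally have "f z j = (\<Sum>i<n. z i * f (unit_vec i) j)"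
      by (simp add: sum_fun_apply zscale_apply)
    then show ?thesis by (simp add: F_def of_int_vec_def)
  qed
  assume "of_int_vec x \<in> RV.span (of_int_vec ` B)"
  then have "F (of_int_vec x) = 0"
  proof (induction rule: RV.span_induct_alt)
    case base
    then show ?case by (simp add: F_def)
  next
    case (step c y z)
    then have "F y = 0" using B F by auto
    moreover have "F (\<lambda>i. c * y i + z i) = c * F y + F z"
      by (simp add: F_def sum.distrib sum_distrib_left algebra_simps)
    ultimately show ?case using step by simp
  qed
  then show False using F[OF x(1)] x(2) by simp
qed

lemma (in vector_space) span_insert_exchange:
  assumes "span B = span A" and "a \<in> span (insert b B)" and "c *s b - a \<in> span A" and "c \<noteq> 0"
  shows "span (insert b B) = span (insert a A)"
  unfolding span_eq
proof
  have "c *s b - a \<in> span (insert a A)"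
    using assms(3) span_mono[of A "insert a A"] by blast
  then have "(c *s b - a) + a \<in> span (insert a A)"
    by (rule span_add) (simp add: span_base)
  then have "c *s b \<in> span (insert a A)" by simp
  then have "b \<in> span (insert a A)"
    using span_scale[of "c *s b" _ "inverse c"] assms(4) by simp
  moreover have "B \<subseteq> span (insert a A)"
    using assms(1) span_superset[of B] span_mono[of A "insert a A"] by auto
  ultimately show "insert b B \<subseteq> span (insert a A)" by simp
  have "A \<subseteq> span (insert b B)"
    using assms(1) span_superset[of A] span_mono[of B "insert b B"] by auto
  then show "insert a A \<subseteq> span (insert b B)" using assms(2) by simp
qed

lemma zlinear_drop_first: "zlinear n m f \<Longrightarrow> zlinear n (m - 1) (\<lambda>x. f x \<circ> Suc)"
  by (auto simp: zlinear_def additive_def mem_zvecs image_subset_iff fun_eq_iff)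

lemma drop_first_image:
  assumes "f ` zvecs n = zvecs m"
  shows "(\<lambda>x. f x \<circ> Suc) ` zvecs n = zvecs (m - 1)"
proof
  show "(\<lambda>x. f x \<circ> Suc) ` zvecs n \<subseteq> zvecs (m - 1)"
  proof clarify
    fix x
    assume "x \<in> zvecs n"
    then have "f x \<in> zvecs m" using assms by blast
    then show "f x \<circ> Suc \<in> zvecs (m - 1)" by (simp add: mem_zvecs)
  qed
  show "zvecs (m - 1) \<subseteq> (\<lambda>x. f x \<circ> Suc) ` zvecs n"
  proof
    fix y
    assume y: "y \<in> zvecs (m - 1)"
    define z where "z i = (if i = 0 then 0 else y (i - 1))" for i
    have "z \<in> zvecs m" using y by (auto simp: mem_zvecs z_def)
    then obtain x where "x \<in> zvecs n" "f x = z" using assms by (metis imageE)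
    moreover have "z \<circ> Suc = y" by (simp add: z_def fun_eq_iff)
    ultimately show "y \<in> (\<lambda>x. f x \<circ> Suc) ` zvecs n" by blast
  qed
qed

lemma kernel_drop_first:
  assumes V: "zlinear n m V" and b: "b \<in> zvecs n" "V b = unit_vec 0"
    and K: "{x \<in> zvecs n. V x = 0} = ZM.span K"
  shows "{x \<in> zvecs n. V x \<circ> Suc = 0} = ZM.span (insert b K)"
proof
  have add: "additive V" using V by (simp add: zlinear_def)
  show "{x \<in> zvecs n. V x \<circ> Suc = 0} \<subseteq> ZM.span (insert b K)"
  proof clarify
    fix x
    assume x: "x \<in> zvecs n" "V x \<circ> Suc = 0"
    have "V (x - zscale (V x 0) b) = 0"
    proof
      fix i
      show "V (x - zscale (V x 0) b) i = 0 i"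
        using fun_cong[OF x(2), of "i - 1"] b(2)
        by (cases i) (simp_all add: additive.diff[OF add] additive_zscale[OF add] zscale_apply unit_vec_def)
    qed
    moreover have "x - zscale (V x 0) b \<in> zvecs n"
      using x(1) b(1) subspace_zvecs by (simp add: ZM.subspace_diff ZM.subspace_scale)
    ultimately have "x - zscale (V x 0) b \<in> ZM.span K" using K by blast
    then show "x \<in> ZM.span (insert b K)" by (auto simp: ZM.span_breakdown_eq)
  qed
  have "additive (\<lambda>x. V x \<circ> Suc)"
    using add by (simp add: additive_def fun_eq_iff)
  moreover have "insert b K \<subseteq> {x \<in> zvecs n. V x \<circ> Suc = 0}"
    using b K ZM.span_superset[of K] by (auto simp: unit_vec_def fun_eq_iff)
  ultimately show "ZM.span (insert b K) \<subseteq> {x \<in> zvecs n. V x \<circ> Suc = 0}"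
    by (intro ZM.span_minimal subspace_kernel)
qed

text \<open>The kernel of \<open>\<pi>\<close> is the saturation of the lattice spanned by \<open>as\<close>, with lattice
  basis \<open>bs\<close>.\<close>

definition saturation_quotient ::
  "nat \<Rightarrow> (nat \<Rightarrow> int) list \<Rightarrow> (nat \<Rightarrow> int) list \<Rightarrow> ((nat \<Rightarrow> int) \<Rightarrow> nat \<Rightarrow> int) \<Rightarrow> nat \<Rightarrow> bool"
where
  "saturation_quotient n as bs \<pi> m \<longleftrightarrow>
     zlinear n m \<pi> \<and> \<pi> ` zvecs n = zvecs m \<and> {x \<in> zvecs n. \<pi> x = 0} = ZM.span (set bs) \<and>
     (\<forall>a\<in>set as. \<pi> a = 0) \<and> m + length bs = n \<and> distinct bs \<and>
     RV.independent (of_int_vec ` set bs) \<and> RV.span (of_int_vec ` set bs) = RV.span (of_int_vec ` set as)"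

lemma saturation_quotient_Nil: "saturation_quotient n [] [] id n"
  by (auto simp: saturation_quotient_def zlinear_def additive_def mem_zvecs RV.independent_empty)

lemma saturation_quotient_unimodular:
  assumes Q: "saturation_quotient n as bs \<pi> m" and U: "unimodular m U"
  shows "saturation_quotient n as bs (U \<circ> \<pi>) m"
proof -
  have \<pi>: "zlinear n m \<pi>" "\<pi> ` zvecs n = zvecs m"
    using Q by (auto simp: saturation_quotient_def)
  have U0: "U 0 = 0" using U additive.zero unfolding unimodular_def zlinear_def by blast
  have "U (\<pi> x) = 0 \<longleftrightarrow> \<pi> x = 0" if "x \<in> zvecs n" for x
  proof -
    have "\<pi> x \<in> zvecs m" "0 \<in> zvecs m" using \<pi>(2) that ZM.subspace_0[OF subspace_zvecs] by blast+
    then show ?thesis using U0 U unfolding unimodular_def bij_betw_def inj_on_def by metis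
  qed
  moreover have "(U \<circ> \<pi>) ` zvecs n = U ` (\<pi> ` zvecs n)" by (simp add: image_comp)
  ultimately show ?thesis
    using Q U0 U zlinear_comp[OF \<pi>(1)]
    by (simp add: saturation_quotient_def unimodular_def bij_betw_def cong: conj_cong)
qed

lemma saturation_quotient_drop_first:
  assumes Q: "saturation_quotient n as bs V m" and a: "a \<in> zvecs n" and b: "b \<in> zvecs n"
    and Vb: "V b = unit_vec 0" and c: "c \<noteq> 0" and Va: "V a = zscale c (unit_vec 0)"
  shows "saturation_quotient n (a # as) (bs @ [b]) (\<lambda>x. V x \<circ> Suc) (m - 1)"
proof -
  have V: "zlinear n m V" "V ` zvecs n = zvecs m" and ker: "{x \<in> zvecs n. V x = 0} = ZM.span (set bs)"
    and span: "RV.span (of_int_vec ` set bs) = RV.span (of_int_vec ` set as)"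
    using Q by (auto simp: saturation_quotient_def)
  have ker': "{x \<in> zvecs n. V x \<circ> Suc = 0} = ZM.span (set (bs @ [b]))"
    using kernel_drop_first[OF V(1) b Vb ker] by simp
  have m: "0 < m" using Vb V(1) b by (force simp: zlinear_def mem_zvecs unit_vec_def)
  have "set bs \<subseteq> {x \<in> zvecs n. V x = 0}" using ker ZM.span_superset by blast
  then have "\<forall>b'\<in>set bs. b' \<in> zvecs n \<and> V b' 0 = 0" by auto
  moreover have "V b 0 \<noteq> 0" using Vb by (simp add: unit_vec_def)
  ultimately have b_new: "of_int_vec b \<notin> RV.span (of_int_vec ` set bs)"
    by (rule coordinate_not_in_span[OF V(1) _ b])
  have "V (zscale c b - a) = 0"
    using V(1) Vb Va by (simp add: zlinear_def additive.diff additive_zscale)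
  moreover have "zscale c b - a \<in> zvecs n"
    using a b subspace_zvecs[of n] by (simp add: ZM.subspace_diff ZM.subspace_scale)
  ultimately have "of_int_vec (zscale c b - a) \<in> RV.span (of_int_vec ` set as)"
    using ker span of_int_vec_span by blast
  moreover have "a \<in> {x \<in> zvecs n. V x \<circ> Suc = 0}"
    using a Va by (simp add: zscale_apply unit_vec_def fun_eq_iff)
  then have "of_int_vec a \<in> RV.span (of_int_vec ` set (bs @ [b]))"
    using ker' of_int_vec_span by blast
  moreover have "real_of_int c \<noteq> 0" using c by simp
  ultimately have "RV.span (of_int_vec ` set (bs @ [b])) = RV.span (of_int_vec ` set (a # as))"
    using RV.span_insert_exchange[OF span] by (simp add: of_int_vec_diff of_int_vec_zscale)
  moreover have "b \<notin> set bs" using b_new by (auto intro: RV.span_base)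
  moreover have "\<forall>a'\<in>set (a # as). V a' \<circ> Suc = 0"
  proof -
    have "\<forall>a'\<in>set as. V a' = 0" using Q by (simp add: saturation_quotient_def)
    moreover have "V a \<circ> Suc = 0" using Va by (simp add: zscale_apply unit_vec_def fun_eq_iff)
    ultimately show ?thesis by (simp add: comp_def zero_fun_def)
  qed
  ultimately show ?thesis
    using Q ker' m b_new zlinear_drop_first[OF V(1)] drop_first_image[OF V(2)]
    by (auto simp: saturation_quotient_def RV.independent_insert)
qed

lemma saturation_quotient_Cons:
  assumes Q: "saturation_quotient n as bs \<pi> m" and a: "a \<in> zvecs n"
  shows "\<exists>bs' \<pi>' m'. saturation_quotient n (a # as) bs' \<pi>' m'"
proof (cases "\<pi> a = 0")
  case True
  have "of_int_vec a \<in> RV.span (of_int_vec ` set as)"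
    using of_int_vec_span[of a "set bs"] a True Q by (auto simp: saturation_quotient_def)
  then have "RV.span (of_int_vec ` set (a # as)) = RV.span (of_int_vec ` set as)"
    by (simp add: RV.span_redundant)
  then have "saturation_quotient n (a # as) bs \<pi> m"
    using Q True by (simp add: saturation_quotient_def)
  then show ?thesis by blast
next
  case False
  have \<pi>: "zlinear n m \<pi>" "\<pi> ` zvecs n = zvecs m"
    using Q by (auto simp: saturation_quotient_def)
  obtain c u where c: "c \<noteq> 0" and u: "primitive m u" and \<pi>a: "\<pi> a = zscale c u"
    using primitive_factor[OF _ False] \<pi> a by blast
  obtain U where U: "unimodular m U" "U u = unit_vec 0"
    using primitive_to_unit_vec[OF u] by blast
  obtain b where b: "b \<in> zvecs n" "\<pi> b = u"
    using u \<pi>(2) by (metis imageE primitive_def)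
  have "(U \<circ> \<pi>) a = zscale c (unit_vec 0)"
    using \<pi>a U u additive_zscale by (simp add: unimodular_def zlinear_def)
  then have "saturation_quotient n (a # as) (bs @ [b]) (\<lambda>x. (U \<circ> \<pi>) x \<circ> Suc) (m - 1)"
    using saturation_quotient_drop_first[OF saturation_quotient_unimodular[OF Q U(1)] a b(1) _ c] b U
    by simp
  then show ?thesis by blast
qed

lemma saturation_quotient_exists: "set as \<subseteq> zvecs n \<Longrightarrow> \<exists>bs \<pi> m. saturation_quotient n as bs \<pi> m"
proof (induction as)
  case Nil
  then show ?case using saturation_quotient_Nil by blast
next
  case (Cons a as)
  then have "set as \<subseteq> zvecs n" "a \<in> zvecs n" by auto
  then show ?case using Cons.IH saturation_quotient_Cons by blast
qed

lemma saturation_quotient_length: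
  assumes "saturation_quotient n as bs \<pi> m"
  shows "length bs = RV.dim (of_int_vec ` set as)"
proof -
  have "length bs = card (set bs)"
    using assms by (simp add: saturation_quotient_def distinct_card)
  also have "\<dots> = card (of_int_vec ` set bs)"
    using inj_of_int_vec by (simp add: card_image inj_on_subset)
  also have "\<dots> = RV.dim (of_int_vec ` set bs)"
    using assms by (simp add: saturation_quotient_def RV.dim_eq_card_independent)
  also have "\<dots> = RV.dim (RV.span (of_int_vec ` set bs))"
    by simp
  also have "\<dots> = RV.dim (of_int_vec ` set as)"
    using assms by (simp add: saturation_quotient_def)
  finally show ?thesis .
qed

lemma saturated_projection_exists:
  assumes "set as \<subseteq> zvecs n"
  obtains bs \<pi> m where "zlinear n m \<pi>" "\<pi> ` zvecs n = zvecs m"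
    "{x \<in> zvecs n. \<pi> x = 0} = ZM.span (set bs)" "\<forall>a\<in>set as. \<pi> a = 0"
    "m + length bs = n" "length bs = RV.dim (of_int_vec ` set as)"
proof -
  obtain bs \<pi> m where Q: "saturation_quotient n as bs \<pi> m"
    using saturation_quotient_exists[OF assms] by blast
  show ?thesis
  proof (rule that[where bs = bs and \<pi> = \<pi> and m = m])
    show "length bs = RV.dim (of_int_vec ` set as)" using Q by (rule saturation_quotient_length)
  qed (use Q in \<open>simp_all add: saturation_quotient_def\<close>)
qed

section \<open>Presentations of free abelian groups\<close>

context
  fixes S :: "'a set" and R :: "'a word set" and \<phi> :: "'a word set \<Rightarrow> nat \<Rightarrow> int" and n :: nat
  assumes hom: "\<phi> \<in> hom (presented_group S R) (Zn n)"
begin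

lemma hom_pclass_append:
  assumes "word_on S u" "word_on S v"
  shows "\<phi> (pclass S R (u @ v)) = \<phi> (pclass S R u) + \<phi> (pclass S R v)"
  using hom pclass_mult[OF assms, of R] pclass_in_carrier[of S _ R] assms
  by (metis (no_types, lifting) hom_mult mult_Zn)

lemma hom_pclass_Nil: "\<phi> (pclass S R []) = 0"
  using hom_pclass_append[of "[]" "[]"] by simp

lemma hom_pclass_syllable:
  assumes g: "g \<in> S"
  shows "\<phi> (pclass S R [(g, a)]) = zscale a (\<phi> (gen S R g))"
proof (induction a rule: int_induct[where k = 0])
  case base
  have "pres_eq S R [(g, 0)] []"
    using pres_eq.zero[of S "[]" "[]" g R] g by simp
  then show ?case
    using pclass_eq_iff[of S "[(g, 0)]" R "[]"] g hom_pclass_Nil by (simp only: ZM.scale_zero_left) simp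
next
  case (step1 i)
  have "pclass S R [(g, i), (g, 1)] = pclass S R [(g, i + 1)]"
    using pclass_eq_iff[of S "[(g, i), (g, 1)]" R] pres_eq.merge[of S "[]" "[]" g R i 1] g by simp
  then have "\<phi> (pclass S R [(g, i + 1)]) = \<phi> (pclass S R [(g, i)]) + \<phi> (gen S R g)"
    using hom_pclass_append[of "[(g, i)]" "[(g, 1)]"] g by (simp add: gen_def)
  then show ?case using step1 by (simp only: ZM.scale_left_distrib ZM.scale_one)
next
  case (step2 i)
  have "pclass S R [(g, i - 1), (g, 1)] = pclass S R [(g, i)]"
    using pclass_eq_iff[of S "[(g, i - 1), (g, 1)]" R] pres_eq.merge[of S "[]" "[]" g R "i - 1" 1] g
    by simp
  then have "\<phi> (pclass S R [(g, i)]) = \<phi> (pclass S R [(g, i - 1)]) + \<phi> (gen S R g)"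
    using hom_pclass_append[of "[(g, i - 1)]" "[(g, 1)]"] g by (simp add: gen_def)
  then show ?case using step2 by (simp add: ZM.scale_left_diff_distrib)
qed

lemma hom_pclass_ab_eval: "word_on S w \<Longrightarrow> \<phi> (pclass S R w) = ab_eval (\<lambda>g. \<phi> (gen S R g)) w"
proof (induction w)
  case Nil
  then show ?case by (simp add: hom_pclass_Nil)
next
  case (Cons x w)
  obtain g a where x: "x = (g, a)" by fastforce
  then have "\<phi> (pclass S R ([(g, a)] @ w)) = \<phi> (pclass S R [(g, a)]) + \<phi> (pclass S R w)"
    using Cons.prems by (intro hom_pclass_append) auto
  then show ?case using Cons x hom_pclass_syllable[of g a] by simp
qed

end

text \<open>The choice of representative is irrelevant once the relators evaluate to \<open>0\<close>, see
  \<open>ab_eval_class_pclass\<close>.\<close>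

definition ab_eval_class :: "('a \<Rightarrow> nat \<Rightarrow> int) \<Rightarrow> 'a word set \<Rightarrow> nat \<Rightarrow> int" where
  "ab_eval_class k A = ab_eval k (SOME w. w \<in> A)"

lemma ab_eval_pres_eq:
  assumes "pres_eq S R u v" and "\<And>r. r \<in> R \<Longrightarrow> ab_eval k r = 0"
  shows "ab_eval k u = ab_eval k v"
  using assms(1)
proof (induction rule: pres_eq.induct)
  case (zero u v g)
  then show ?case by simp
next
  case (merge u v g a b)
  then show ?case by (simp add: ZM.scale_left_distrib add.assoc)
qed (use assms(2) in auto)

lemma ab_eval_class_pclass:
  assumes "\<And>r. r \<in> R \<Longrightarrow> ab_eval k r = 0" and "word_on S u"
  shows "ab_eval_class k (pclass S R u) = ab_eval k u"
proof -
  have "u \<in> pclass S R u" using assms(2) by (simp add: pclass_def pres_eq.refl)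
  then have "(SOME w. w \<in> pclass S R u) \<in> pclass S R u" by (rule someI)
  then show ?thesis
    using ab_eval_pres_eq[OF _ assms(1)] by (auto simp: ab_eval_class_def pclass_def)
qed

lemma ab_eval_class_hom:
  assumes "\<And>r. r \<in> R \<Longrightarrow> ab_eval k r = 0" and "\<And>g. g \<in> S \<Longrightarrow> k g \<in> zvecs m"
  shows "ab_eval_class k \<in> hom (presented_group S R) (Zn m)"
proof (rule homI)
  fix A
  assume "A \<in> carrier (presented_group S R)"
  then obtain u where "word_on S u" "A = pclass S R u" by (auto simp: carrier_presented_group)
  then show "ab_eval_class k A \<in> carrier (Zn m)"
    using ab_eval_class_pclass[OF assms(1)] ab_eval_in_zvecs[OF _ assms(2)] by (simp add: carrier_Zn)
next
  fix A B
  assume "A \<in> carrier (presented_group S R)" "B \<in> carrier (presented_group S R)"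
  then obtain u v where "word_on S u" "A = pclass S R u" "word_on S v" "B = pclass S R v"
    by (auto simp: carrier_presented_group)
  then show "ab_eval_class k (A \<otimes>\<^bsub>presented_group S R\<^esub> B) = ab_eval_class k A \<otimes>\<^bsub>Zn m\<^esub> ab_eval_class k B"
    using ab_eval_class_pclass[OF assms(1)] by (simp add: pclass_mult mult_Zn)
qed

lemma iso_pclass_surj:
  assumes "\<phi> \<in> iso (presented_group S R) (Zn n)" and "x \<in> zvecs n"
  obtains w where "word_on S w" "\<phi> (pclass S R w) = x"
proof -
  have "x \<in> \<phi> ` pclass S R ` {w. word_on S w}"
    using assms by (simp add: iso_def bij_betw_def carrier_Zn carrier_presented_group)
  then show ?thesis using that by blast
qed

lemma iso_pclass_eqD:
  assumes "\<phi> \<in> iso (presented_group S R) (Zn n)" and "word_on S u" "word_on S v"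
    and "\<phi> (pclass S R u) = \<phi> (pclass S R v)"
  shows "pres_eq S R u v"
proof -
  have "inj_on \<phi> (carrier (presented_group S R))"
    using assms(1) by (simp add: iso_def bij_betw_def)
  then have "pclass S R u = pclass S R v"
    using assms(4) pclass_in_carrier[OF assms(2)] pclass_in_carrier[OF assms(3)] by (rule inj_onD)
  then show ?thesis using assms(2) by (simp add: pclass_eq_iff)
qed

lemma iso_gen_in_zvecs:
  assumes "\<phi> \<in> iso (presented_group S R) (Zn n)" and "g \<in> S"
  shows "\<phi> (gen S R g) \<in> zvecs n"
proof -
  have "\<phi> (gen S R g) \<in> carrier (Zn n)"
    unfolding gen_def using assms by (intro hom_in_carrier[OF _ pclass_in_carrier]) (auto simp: iso_def)
  then show ?thesis by (simp add: carrier_Zn)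
qed

lemma iso_words_realizing:
  assumes "\<phi> \<in> iso (presented_group S R) (Zn n)" and "set bs \<subseteq> zvecs n"
  obtains ws where "length ws = length bs" "\<forall>w\<in>set ws. word_on S w"
    "(\<lambda>w. \<phi> (pclass S R w)) ` set ws = set bs"
proof
  define word where "word x = (SOME w. word_on S w \<and> \<phi> (pclass S R w) = x)" for x
  have word: "word_on S (word x) \<and> \<phi> (pclass S R (word x)) = x" if "x \<in> set bs" for x
    unfolding word_def by (rule someI_ex) (meson iso_pclass_surj[OF assms(1)] assms(2) that subsetD)
  show "length (map word bs) = length bs" by simp
  show "\<forall>w\<in>set (map word bs). word_on S w" using word by auto
  have "(\<lambda>w. \<phi> (pclass S R w)) ` set (map word bs) = id ` set bs"
    unfolding set_map image_image using word by (intro image_cong) auto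
  then show "(\<lambda>w. \<phi> (pclass S R w)) ` set (map word bs) = set bs" by simp
qed

section \<open>Deleting generators\<close>

locale generator_deletion =
  fixes S :: "'a set" and R :: "'a word set" and \<phi> :: "'a word set \<Rightarrow> nat \<Rightarrow> int" and n :: nat
    and S' :: "'a set" and \<pi> :: "(nat \<Rightarrow> int) \<Rightarrow> nat \<Rightarrow> int" and m :: nat and ws :: "'a word list"
  assumes iso: "\<phi> \<in> iso (presented_group S R) (Zn n)"
    and relators_on: "\<forall>r\<in>R. word_on S r"
    and words_on: "\<forall>w\<in>set ws. word_on S w"
    and \<pi>: "zlinear n m \<pi>" "\<pi> ` zvecs n = zvecs m"
    and kernel: "{x \<in> zvecs n. \<pi> x = 0} = ZM.span ((\<lambda>w. \<phi> (pclass S R w)) ` set ws)"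
    and killed: "\<forall>g\<in>S'. \<pi> (\<phi> (gen S R g)) = 0"
begin

abbreviation gen_image :: "'a \<Rightarrow> nat \<Rightarrow> int" where
  "gen_image g \<equiv> \<pi> (\<phi> (gen S R g))"

abbreviation deleted_relators :: "'a word set" where
  "deleted_relators \<equiv> delete_gens S' ` (R \<union> set ws)"

lemma hom_\<phi>: "\<phi> \<in> hom (presented_group S R) (Zn n)"
  using iso by (simp add: iso_def)

lemma additive_\<pi>: "additive \<pi>"
  using \<pi>(1) by (simp add: zlinear_def)

lemma pclass_in_zvecs: "word_on S w \<Longrightarrow> \<phi> (pclass S R w) \<in> zvecs n"
  using hom_in_carrier[OF hom_\<phi> pclass_in_carrier] by (simp add: carrier_Zn)

lemma gen_image_in_zvecs: "g \<in> S \<Longrightarrow> gen_image g \<in> zvecs m"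
  using pclass_in_zvecs[of "[(g, 1)]"] \<pi>(1) by (auto simp: gen_def zlinear_def)

lemma gen_image_ab_eval: "word_on S w \<Longrightarrow> \<pi> (\<phi> (pclass S R w)) = ab_eval gen_image w"
  using hom_pclass_ab_eval[OF hom_\<phi>] additive_ab_eval[OF additive_\<pi>] by (simp add: comp_def)

lemma deleted_relator_gen_image:
  assumes "r \<in> deleted_relators"
  shows "ab_eval gen_image r = 0"
proof -
  obtain r0 where r0: "r = delete_gens S' r0" "r0 \<in> R \<union> set ws" using assms by blast
  then have on: "word_on S r0" using relators_on words_on by blast
  have "ab_eval gen_image r = \<pi> (\<phi> (pclass S R r0))"
    using ab_eval_delete_gens[of S' gen_image r0] killed gen_image_ab_eval[OF on] r0(1) by simp
  also have "\<dots> = 0"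
  proof (cases "r0 \<in> R")
    case True
    then have "pclass S R r0 = pclass S R []"
      using pclass_eq_iff[OF on] pres_eq_relator[OF True on] by blast
    then show ?thesis
      using hom_pclass_Nil[OF hom_\<phi>] additive.zero[OF additive_\<pi>] by simp
  next
    case False
    then have "\<phi> (pclass S R r0) \<in> ZM.span ((\<lambda>w. \<phi> (pclass S R w)) ` set ws)"
      using r0(2) by (auto intro: ZM.span_base)
    then show ?thesis using kernel by blast
  qed
  finally show ?thesis .
qed

lemma pres_eq_deleted:
  "pres_eq S R u v \<Longrightarrow> pres_eq (S - S') deleted_relators (delete_gens S' u) (delete_gens S' v)"
  by (erule pres_eq_mono[OF pres_eq_delete_gens]) auto

text \<open>The differences \<open>\<phi> u - \<phi> v\<close> that force \<open>u\<close> and \<open>v\<close> to agree after deletion form a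
  subgroup of \<open>\<int>\<^sup>n\<close>; it contains the images of the words \<open>ws\<close>, hence the kernel of \<open>\<pi>\<close>.\<close>

definition deletable :: "(nat \<Rightarrow> int) set" where
  "deletable = {x \<in> zvecs n. \<forall>u v. word_on S u \<longrightarrow> word_on S v \<longrightarrow>
     \<phi> (pclass S R u) = \<phi> (pclass S R v) + x \<longrightarrow>
     pres_eq (S - S') deleted_relators (delete_gens S' u) (delete_gens S' v)}"

lemma deletableD:
  "x \<in> deletable \<Longrightarrow> word_on S u \<Longrightarrow> word_on S v \<Longrightarrow> \<phi> (pclass S R u) = \<phi> (pclass S R v) + x
    \<Longrightarrow> pres_eq (S - S') deleted_relators (delete_gens S' u) (delete_gens S' v)"
  by (simp add: deletable_def)

lemma zero_deletable: "0 \<in> deletable"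
  unfolding deletable_def using iso_pclass_eqD[OF iso] pres_eq_deleted
  by (auto simp: ZM.subspace_0[OF subspace_zvecs])

lemma add_deletable:
  assumes x: "x \<in> deletable" and y: "y \<in> deletable"
  shows "x + y \<in> deletable"
  unfolding deletable_def
proof (intro CollectI conjI allI impI)
  show "x + y \<in> zvecs n" using x y by (simp add: deletable_def ZM.subspace_add[OF subspace_zvecs])
  fix u v
  assume uv: "word_on S u" "word_on S v" "\<phi> (pclass S R u) = \<phi> (pclass S R v) + (x + y)"
  have "\<phi> (pclass S R v) + y \<in> zvecs n"
    using pclass_in_zvecs[OF uv(2)] y by (simp add: deletable_def ZM.subspace_add[OF subspace_zvecs])
  then obtain w where w: "word_on S w" "\<phi> (pclass S R w) = \<phi> (pclass S R v) + y"
    using iso_pclass_surj[OF iso] by blast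
  have "pres_eq (S - S') deleted_relators (delete_gens S' u) (delete_gens S' w)"
    using deletableD[OF x uv(1) w(1)] uv(3) w(2) by (simp add: ac_simps)
  moreover have "pres_eq (S - S') deleted_relators (delete_gens S' w) (delete_gens S' v)"
    by (rule deletableD[OF y w(1) uv(2) w(2)])
  ultimately show "pres_eq (S - S') deleted_relators (delete_gens S' u) (delete_gens S' v)"
    by (rule pres_eq.trans)
qed

lemma neg_deletable:
  assumes x: "x \<in> deletable"
  shows "- x \<in> deletable"
  unfolding deletable_def
proof (intro CollectI conjI allI impI)
  show "- x \<in> zvecs n" using x by (simp add: deletable_def ZM.subspace_neg[OF subspace_zvecs])
  fix u v
  assume uv: "word_on S u" "word_on S v" "\<phi> (pclass S R u) = \<phi> (pclass S R v) + - x"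
  then have "\<phi> (pclass S R v) = \<phi> (pclass S R u) + x" by (simp add: add.assoc)
  then have "pres_eq (S - S') deleted_relators (delete_gens S' v) (delete_gens S' u)"
    by (rule deletableD[OF x uv(2) uv(1)])
  then show "pres_eq (S - S') deleted_relators (delete_gens S' u) (delete_gens S' v)"
    by (rule pres_eq.sym)
qed

lemma new_relator_deletable:
  assumes w0: "w0 \<in> set ws"
  shows "\<phi> (pclass S R w0) \<in> deletable"
proof -
  have on: "word_on S w0" using w0 words_on by blast
  have "pres_eq (S - S') deleted_relators (delete_gens S' u) (delete_gens S' v)"
    if uv: "word_on S u" "word_on S v" "\<phi> (pclass S R u) = \<phi> (pclass S R v) + \<phi> (pclass S R w0)"
    for u v
  proof -
    have "pres_eq S R u (v @ w0)"
      using iso_pclass_eqD[OF iso] hom_pclass_append[OF hom_\<phi>] uv on by simp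
    then have "pres_eq (S - S') deleted_relators (delete_gens S' u) (delete_gens S' v @ delete_gens S' w0)"
      using pres_eq_deleted by (metis delete_gens_append)
    moreover have "pres_eq (S - S') deleted_relators (delete_gens S' w0) []"
      using w0 on by (intro pres_eq_relator) (auto intro: word_on_delete_gens)
    then have "pres_eq (S - S') deleted_relators (delete_gens S' v @ delete_gens S' w0) (delete_gens S' v @ [])"
      by (rule pres_eq_append[OF pres_eq.refl[OF word_on_delete_gens[OF uv(2)]]])
    ultimately have "pres_eq (S - S') deleted_relators (delete_gens S' u) (delete_gens S' v @ [])"
      by (rule pres_eq.trans)
    then show ?thesis by simp
  qed
  then show ?thesis using pclass_in_zvecs[OF on] by (simp add: deletable_def)
qed

lemma kernel_subset_deletable: "{x \<in> zvecs n. \<pi> x = 0} \<subseteq> deletable"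
  unfolding kernel
  by (intro ZM.span_minimal ZM_subspaceI zero_deletable add_deletable neg_deletable)
    (auto intro: new_relator_deletable)

lemma hom_deleted: "ab_eval_class gen_image \<in> hom (presented_group (S - S') deleted_relators) (Zn m)"
  by (rule ab_eval_class_hom[OF deleted_relator_gen_image gen_image_in_zvecs]) auto

lemma ab_eval_class_deleted:
  "word_on (S - S') u \<Longrightarrow> ab_eval_class gen_image (pclass (S - S') deleted_relators u) = ab_eval gen_image u"
  by (rule ab_eval_class_pclass[OF deleted_relator_gen_image])

lemma pres_eq_deleted_if_ab_eval_eq:
  assumes u: "word_on (S - S') u" and v: "word_on (S - S') v"
    and eq: "ab_eval gen_image u = ab_eval gen_image v"
  shows "pres_eq (S - S') deleted_relators u v"
proof -
  have on: "word_on S u" "word_on S v" using u v by (auto intro: word_on_mono)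
  define x where "x = \<phi> (pclass S R u) - \<phi> (pclass S R v)"
  have "\<pi> x = 0"
    using eq on by (simp add: x_def gen_image_ab_eval additive.diff[OF additive_\<pi>])
  moreover have "x \<in> zvecs n"
    using on by (simp add: x_def pclass_in_zvecs ZM.subspace_diff[OF subspace_zvecs])
  ultimately have "x \<in> deletable"
    using kernel_subset_deletable by blast
  then have "pres_eq (S - S') deleted_relators (delete_gens S' u) (delete_gens S' v)"
    by (rule deletableD[OF _ on]) (simp add: x_def)
  then show ?thesis
    using delete_gens_id[OF u] delete_gens_id[OF v] by simp
qed

lemma inj_on_deleted:
  "inj_on (ab_eval_class gen_image) (carrier (presented_group (S - S') deleted_relators))"
proof (rule inj_onI)
  fix A B
  assume "A \<in> carrier (presented_group (S - S') deleted_relators)"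
    and "B \<in> carrier (presented_group (S - S') deleted_relators)"
    and eq: "ab_eval_class gen_image A = ab_eval_class gen_image B"
  then obtain u v where u: "word_on (S - S') u" "A = pclass (S - S') deleted_relators u"
    and v: "word_on (S - S') v" "B = pclass (S - S') deleted_relators v"
    by (auto simp: carrier_presented_group)
  then have "pres_eq (S - S') deleted_relators u v"
    using eq by (intro pres_eq_deleted_if_ab_eval_eq) (simp_all add: ab_eval_class_deleted)
  then show "A = B" unfolding u(2) v(2) using pclass_eq_iff[OF u(1)] by blast
qed

lemma image_deleted:
  "ab_eval_class gen_image ` carrier (presented_group (S - S') deleted_relators) = zvecs m"
proof
  show "ab_eval_class gen_image ` carrier (presented_group (S - S') deleted_relators) \<subseteq> zvecs m"
    using hom_carrier[OF hom_deleted] by (simp only: carrier_Zn)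
  show "zvecs m \<subseteq> ab_eval_class gen_image ` carrier (presented_group (S - S') deleted_relators)"
  proof
    fix y
    assume "y \<in> zvecs m"
    then have "y \<in> \<pi> ` zvecs n" using \<pi>(2) by simp
    then obtain x where x: "x \<in> zvecs n" "\<pi> x = y" by blast
    then obtain w where w: "word_on S w" "\<phi> (pclass S R w) = x" using iso_pclass_surj[OF iso] by blast
    have "ab_eval_class gen_image (pclass (S - S') deleted_relators (delete_gens S' w))
        = ab_eval gen_image (delete_gens S' w)"
      by (rule ab_eval_class_deleted[OF word_on_delete_gens[OF w(1)]])
    also have "\<dots> = ab_eval gen_image w"
      by (rule ab_eval_delete_gens) (use killed in auto)
    also have "\<dots> = y"
      using gen_image_ab_eval[OF w(1)] w(2) x(2) by simp
    finally show "y \<in> ab_eval_class gen_image ` carrier (presented_group (S - S') deleted_relators)"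
      using pclass_in_carrier[OF word_on_delete_gens[OF w(1)]] by (metis image_eqI)
  qed
qed

theorem deleted_presentation_iso:
  "ab_eval_class gen_image \<in> iso (presented_group (S - S') deleted_relators) (Zn m)"
  using hom_deleted inj_on_deleted image_deleted unfolding iso_def bij_betw_def carrier_Zn by blast

end

lemma gen_dim_eq_dim:
  "set as = (\<lambda>g. \<phi> (gen S R g)) ` S' \<Longrightarrow> gen_dim S R \<phi> S' = RV.dim (of_int_vec ` set as)"
  by (simp add: gen_dim_def image_image of_int_vec_def)

theorem mainTheorem15:
  fixes S S' :: "'a set" and R :: "'a word list" and n :: nat
    and \<phi> :: "'a word set \<Rightarrow> (nat \<Rightarrow> int)"
  assumes "three_presentation S R"
    and "\<phi> \<in> iso (presented_group S (set R)) (Zn n)"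
    and "S' \<subseteq> S"
  shows "\<exists>ws :: 'a word list.
           length ws = gen_dim S (set R) \<phi> S' \<and> (\<forall>w\<in>set ws. word_on S w) \<and>
           (let R'' = map (delete_gens S') (R @ ws) in
              presented_group (S - S') (set R'') \<cong> Zn (n - gen_dim S (set R) \<phi> S') \<and>
              length R'' = length R + gen_dim S (set R) \<phi> S')"
proof -
  have relators_on: "\<forall>r\<in>set R. word_on S r" and "finite S'"
    using assms(1,3) finite_subset by (auto simp: three_presentation_def)
  then obtain as where as: "set as = (\<lambda>g. \<phi> (gen S (set R) g)) ` S'"
    by (meson finite_imageI finite_list)
  then have "set as \<subseteq> zvecs n" using assms(3) iso_gen_in_zvecs[OF assms(2)] by auto
  then obtain bs \<pi> m where \<pi>: "zlinear n m \<pi>" "\<pi> ` zvecs n = zvecs m"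
    and kernel: "{x \<in> zvecs n. \<pi> x = 0} = ZM.span (set bs)" and killed: "\<forall>a\<in>set as. \<pi> a = 0"
    and m: "m + length bs = n" and dim: "length bs = RV.dim (of_int_vec ` set as)"
    by (rule saturated_projection_exists)
  have "set bs \<subseteq> zvecs n" using kernel ZM.span_superset by blast
  then obtain ws where ws: "length ws = length bs" "\<forall>w\<in>set ws. word_on S w"
    "(\<lambda>w. \<phi> (pclass S (set R) w)) ` set ws = set bs"
    using iso_words_realizing[OF assms(2)] by blast
  interpret generator_deletion S "set R" \<phi> n S' \<pi> m ws
    using assms(2) relators_on ws(2) \<pi> kernel killed as by unfold_locales (auto simp: ws(3))
  have "presented_group (S - S') (delete_gens S' ` (set R \<union> set ws)) \<cong> Zn m"
    by (rule is_isoI[OF deleted_presentation_iso])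
  moreover have "set (map (delete_gens S') (R @ ws)) = delete_gens S' ` (set R \<union> set ws)"
    by auto
  moreover have "length ws = gen_dim S (set R) \<phi> S'" "n - gen_dim S (set R) \<phi> S' = m"
    using gen_dim_eq_dim[OF as] dim ws(1) m by simp_all
  ultimately show ?thesis
    using ws(2) by (intro exI[of _ ws]) (simp add: Let_def)
qed

end
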